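(* Let $D$ be a domain in a metric measure space $(X,d,\mu)$ of finite Hausdorff dimension $\alpha\geqslant2$, let $x_0\in D$, and let $(X',d',\mu')$ be an Ahlfors $\alpha'$-regular metric measure space ($\alpha'\geqslant2$) supporting a $(1;\alpha')$-Poincaré inequality. Let $Q:D\to[0,\infty]$ be measurable and let $f:D\setminus\{x_0\}\to X'$ be a ring $Q$-mapping at $x_0$. Assume there exist $\varepsilon_0>0$ and a Lebesgue measurable $\psi:(0,\varepsilon_0)\to[0,\infty]$ such that for every $\varepsilon_2\in(0,\varepsilon_0]$ there is $\varepsilon_1\in(0,\varepsilon_2]$ with $0<I(\varepsilon,\varepsilon_2):=\int_\varepsilon^{\varepsilon_2}\psi(t)\,dt<\infty$ for every $\varepsilon\in(0,\varepsilon_1)$, and that $\int_{\varepsilon<d(x,x_0)<\varepsilon_0}Q(x)\psi^\alpha(d(x,x_0))\,d\mu(x)=o(I^\alpha(\varepsilon,\varepsilon_0))$ as $\varepsilon\to0$. Let $\Gamma$ be the family of all curves $\gamma:(0,1)\to D\setminus\{x_0\}$ such that $\gamma(t_k)\to x_0$ for some sequence $t_k\to0$. Then $M_{\alpha'}(f(\Gamma))=0$.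
   Context: $(X,d,\mu)$, $(X',d',\mu')$ are metric spaces with locally finite Borel measures. $B(x_0,r)=\{x:d(x,x_0)<r\}$, $S(x_0,r)=\{x:d(x,x_0)=r\}$, $A(x_0,r_1,r_2)=\{x:r_1<d(x,x_0)<r_2\}$. $\Gamma(E,F,H)$ is the family of continuous curves $\gamma:[0,1]\to X$ with $\gamma(0)\in E$, $\gamma(1)\in F$, $\gamma(t)\in H$ for $t\in(0,1)$. A Borel $\rho\geqslant0$ is admissible for a curve family $\Gamma$ if $\int_\gamma\rho\,ds\geqslant1$ for each locally rectifiable $\gamma\in\Gamma$; $M_{\alpha'}(\Gamma)=\inf_\rho\int_{X'}\rho^{\alpha'}d\mu'$. A mapping $f:G\to X'$ ($G=D\setminus\{x_0\}$) is a ring $Q$-mapping at $x_0$ if for all $0<r_1<r_2<\infty$ and every Lebesgue measurable $\eta:(r_1,r_2)\to[0,\infty]$ with $\int_{r_1}^{r_2}\eta\,dr\geqslant1$: $M_{\alpha'}(f(\Gamma(S(x_0,r_1),S(x_0,r_2),A(x_0,r_1,r_2))))\leqslant\int_{A(x_0,r_1,r_2)\cap G}Q(x)\eta^\alpha(d(x,x_0))\,d\mu(x)$ (only curves lying in $G$ are mapped). Ahlfors $\alpha'$-regular: $C^{-1}r^{\alpha'}\leqslant\mu'(B(y,r))\leqslant Cr^{\alpha'}$ for some $C\geqslant1$, all $y$, all $r<\operatorname{diam}X'$. $(1;p)$-Poincaré inequality: $\frac{1}{\mu'(B)}\int_B|u-u_B|d\mu'\leqslant C\operatorname{diam}(B)(\frac{1}{\mu'(B)}\int_B\rho^pd\mu')^{1/p}$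 for all balls $B$, bounded continuous $u$ on $B$ and upper gradients $\rho$ of $u$ (i.e. $|u(x)-u(y)|\leqslant\int_\gamma\rho\,ds$ for each rectifiable $\gamma$ joining $x,y$). *)

theory Defs
  imports "HOL-Analysis.Analysis"
begin

definition epowr :: "ennreal \<Rightarrow> real \<Rightarrow> ennreal" where
  "epowr x p = (if x = top then (if p > 0 then top else if p = 0 then 1 else 0)
                else ennreal (enn2real x powr p))"

definition ediam :: "'a::metric_space set \<Rightarrow> ennreal" where
  "ediam S = (SUP x\<in>S. SUP y\<in>S. ennreal (dist x y))"

definition hausdorff_pre :: "real \<Rightarrow> real \<Rightarrow> 'a::metric_space set \<Rightarrow> ennreal" where
  "hausdorff_pre s \<delta> E =
     (INF A \<in> {A :: nat \<Rightarrow> 'a set. E \<subseteq> (\<Union>i. A i) \<and> (\<forall>i. ediam (A i) \<le> ennreal \<delta>)}.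
        (\<Sum>i. epowr (ediam (A i)) s))"

definition hausdorff_measure :: "real \<Rightarrow> 'a::metric_space set \<Rightarrow> ennreal" where
  "hausdorff_measure s E = (SUP \<delta> \<in> {0<..}. hausdorff_pre s \<delta> E)"

definition hausdorff_dimension :: "'a::metric_space set \<Rightarrow> ereal" where
  "hausdorff_dimension E = Inf {ereal s | s. 0 \<le> s \<and> hausdorff_measure s E = 0}"

definition loc_finite_borel :: "'a::metric_space measure \<Rightarrow> bool" where
  "loc_finite_borel M \<longleftrightarrow> sets M = sets borel \<and>
     (\<forall>x. \<exists>r>0. emeasure M (ball x r) < \<infinity>)"

definition curve_length :: "(real \<Rightarrow> 'a::metric_space) \<Rightarrow> real \<Rightarrow> real \<Rightarrow> ennreal" where
  "curve_length \<gamma> a b =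
     (SUP (n, t) \<in> {(n, t :: nat \<Rightarrow> real). t 0 = a \<and> t n = b \<and> (\<forall>i<n. t i \<le> t (Suc i))}.
        (\<Sum>i<n. ennreal (dist (\<gamma> (t i)) (\<gamma> (t (Suc i))))))"

definition rectifiable_on :: "(real \<Rightarrow> 'a::metric_space) \<Rightarrow> real \<Rightarrow> real \<Rightarrow> bool" where
  "rectifiable_on \<gamma> a b \<longleftrightarrow> a \<le> b \<and> continuous_on {a..b} \<gamma> \<and> curve_length \<gamma> a b < \<infinity>"

definition loc_rectifiable :: "real set \<Rightarrow> (real \<Rightarrow> 'a::metric_space) \<Rightarrow> bool" where
  "loc_rectifiable I \<gamma> \<longleftrightarrow> continuous_on I \<gamma> \<and>
     (\<forall>a b. a \<le> b \<and> {a..b} \<subseteq> I \<longrightarrow> curve_length \<gamma> a b < \<infinity>)"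

definition line_integral_seg :: "('a::metric_space \<Rightarrow> ennreal) \<Rightarrow> (real \<Rightarrow> 'a) \<Rightarrow> real \<Rightarrow> real \<Rightarrow> ennreal" where
  "line_integral_seg \<rho> \<gamma> a b =
     (\<integral>\<^sup>+ t. indicator {a..b} t * \<rho> (\<gamma> t)
        \<partial>interval_measure (\<lambda>s. enn2real (curve_length \<gamma> a (max a (min b s)))))"

definition line_integral :: "real set \<Rightarrow> ('a::metric_space \<Rightarrow> ennreal) \<Rightarrow> (real \<Rightarrow> 'a) \<Rightarrow> ennreal" where
  "line_integral I \<rho> \<gamma> =
     (SUP (a, b) \<in> {(a, b). a \<le> b \<and> {a..b} \<subseteq> I}. line_integral_seg \<rho> \<gamma> a b)"

definition admissible :: "real set \<Rightarrow> (real \<Rightarrow> 'a::metric_space) set \<Rightarrow> ('a \<Rightarrow> ennreal) \<Rightarrow> bool" where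
  "admissible I \<Gamma> \<rho> \<longleftrightarrow> \<rho> \<in> borel_measurable borel \<and>
     (\<forall>\<gamma>\<in>\<Gamma>. loc_rectifiable I \<gamma> \<longrightarrow> line_integral I \<rho> \<gamma> \<ge> 1)"

definition modulus :: "'a::metric_space measure \<Rightarrow> real \<Rightarrow> real set \<Rightarrow> (real \<Rightarrow> 'a) set \<Rightarrow> ennreal" where
  "modulus M p I \<Gamma> = (INF \<rho> \<in> {\<rho>. admissible I \<Gamma> \<rho>}. \<integral>\<^sup>+ y. epowr (\<rho> y) p \<partial>M)"

definition curves_between :: "'a::metric_space set \<Rightarrow> 'a set \<Rightarrow> 'a set \<Rightarrow> (real \<Rightarrow> 'a) set" where
  "curves_between E F H = {\<gamma>. continuous_on {0..1} \<gamma> \<and> \<gamma> 0 \<in> E \<and> \<gamma> 1 \<in> F \<and>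
                              (\<forall>t\<in>{0<..<1}. \<gamma> t \<in> H)}"

definition sphere_at :: "'a::metric_space \<Rightarrow> real \<Rightarrow> 'a set" where
  "sphere_at x0 r = {x. dist x x0 = r}"

definition annulus :: "'a::metric_space \<Rightarrow> real \<Rightarrow> real \<Rightarrow> 'a set" where
  "annulus x0 r1 r2 = {x. r1 < dist x x0 \<and> dist x x0 < r2}"

definition ring_Q_mapping ::
  "'a::metric_space measure \<Rightarrow> real \<Rightarrow> 'b::metric_space measure \<Rightarrow> real \<Rightarrow>
   'a set \<Rightarrow> 'a \<Rightarrow> ('a \<Rightarrow> ennreal) \<Rightarrow> ('a \<Rightarrow> 'b) \<Rightarrow> bool" where
  "ring_Q_mapping \<mu> \<alpha> \<mu>' \<alpha>' D x0 Q f \<longleftrightarrow>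
     (\<forall>r1 r2 (\<eta> :: real \<Rightarrow> ennreal). 0 < r1 \<and> r1 < r2 \<and> \<eta> \<in> borel_measurable lebesgue \<and>
        (\<integral>\<^sup>+ r \<in> {r1<..<r2}. \<eta> r \<partial>lebesgue) \<ge> 1 \<longrightarrow>
        modulus \<mu>' \<alpha>' {0..1}
          ((\<lambda>\<gamma>. f \<circ> \<gamma>) ` {\<gamma> \<in> curves_between (sphere_at x0 r1) (sphere_at x0 r2) (annulus x0 r1 r2).
                              \<gamma> ` {0..1} \<subseteq> D - {x0}})
        \<le> (\<integral>\<^sup>+ x \<in> annulus x0 r1 r2 \<inter> (D - {x0}). Q x * epowr (\<eta> (dist x x0)) \<alpha> \<partial>\<mu>))"

definition ahlfors_regular :: "'b::metric_space measure \<Rightarrow> real \<Rightarrow> bool" where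
  "ahlfors_regular \<mu>' \<alpha>' \<longleftrightarrow> (\<exists>C\<ge>1. \<forall>y r. 0 < r \<and> ennreal r < ediam (UNIV :: 'b set) \<longrightarrow>
      ennreal (r powr \<alpha>' / C) \<le> emeasure \<mu>' (ball y r) \<and>
      emeasure \<mu>' (ball y r) \<le> ennreal (C * r powr \<alpha>'))"

definition upper_gradient_on :: "'b::metric_space set \<Rightarrow> ('b \<Rightarrow> real) \<Rightarrow> ('b \<Rightarrow> ennreal) \<Rightarrow> bool" where
  "upper_gradient_on B u \<rho> \<longleftrightarrow> \<rho> \<in> borel_measurable borel \<and>
     (\<forall>\<gamma>. rectifiable_on \<gamma> 0 1 \<and> \<gamma> ` {0..1} \<subseteq> B \<longrightarrow>
        ennreal \<bar>u (\<gamma> 0) - u (\<gamma> 1)\<bar> \<le> line_integral {0..1} \<rho> \<gamma>)"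

definition poincare_1p :: "'b::metric_space measure \<Rightarrow> real \<Rightarrow> bool" where
  "poincare_1p \<mu>' p \<longleftrightarrow> (\<exists>C>0. \<forall>z r u \<rho>.
     let B = ball z r; m = measure \<mu>' B;
         uB = (\<integral>x\<in>B. u x \<partial>\<mu>') / m in
     0 < r \<and> 0 < emeasure \<mu>' B \<and> emeasure \<mu>' B < \<infinity> \<and>
     continuous_on B u \<and> bounded (u ` B) \<and> upper_gradient_on B u \<rho> \<longrightarrow>
     ennreal ((\<integral>x\<in>B. \<bar>u x - uB\<bar> \<partial>\<mu>') / m)
       \<le> ennreal (C * enn2real (ediam B)) *
          epowr ((\<integral>\<^sup>+ x \<in> B. epowr (\<rho> x) p \<partial>\<mu>') / ennreal m) (1 / p))"

end

theory Submission
  imports Defs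
begin

text \<open>A ring \<open>Q\<close>-mapping controls the modulus of the image of the curves crossing an annulus
  \<open>A(x\<^sub>0, r\<^sub>1, r\<^sub>2)\<close> by \<open>\<integral> Q \<eta>\<^sup>\<alpha>\<close>. With \<open>\<eta> = \<psi> / I(r\<^sub>1, r\<^sub>2)\<close> this is at most
  \<open>\<integral>\<^bsub>A(x\<^sub>0,r\<^sub>1,\<epsilon>\<^sub>0)\<^esub> Q \<psi>\<^sup>\<alpha> / I(r\<^sub>1, r\<^sub>2)\<^sup>\<alpha>\<close>; for fixed \<open>r\<^sub>2\<close> the ratio \<open>I(r\<^sub>1, \<epsilon>\<^sub>0) / I(r\<^sub>1, r\<^sub>2)\<close> stays
  bounded as \<open>r\<^sub>1 \<rightarrow> 0\<close>, so the little-o hypothesis makes these moduli arbitrarily small.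
  A curve in \<open>D - {x\<^sub>0}\<close> accumulating at \<open>x\<^sub>0\<close> and leaving the ball \<open>B(x\<^sub>0, r\<^sub>2)\<close> contains a
  subarc crossing every such annulus, so the image of the family of these curves has modulus
  zero. The curves of the theorem form the countable union of these families over
  \<open>r\<^sub>2 = \<epsilon>\<^sub>0 / (m + 1)\<close>, and modulus zero is preserved under countable unions.
  Only the ring property, the hypotheses on \<open>\<psi>\<close>, \<open>\<alpha>, \<alpha>' > 0\<close> and the Borel sets of \<open>\<mu>'\<close>
  are used.\<close>

subsection \<open>Affine reparametrisation of curves\<close>

text \<open>\<open>interval_measure\<close> is the zero measure unless \<open>F\<close> really induces a measure
  with \<open>\<mu> (a, b] = F b - F a\<close>; the arc length functions below need not be monotone,
  so both cases have to be carried along.\<close>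

definition interval_measure_exact :: "(real \<Rightarrow> real) \<Rightarrow> bool" where
  "interval_measure_exact F \<longleftrightarrow>
     (\<forall>a b. a \<le> b \<longrightarrow> emeasure (interval_measure F) {a<..b} = ennreal (F b - F a))"

lemma emeasure_interval_measure_Ioc_cases:
  assumes "a \<le> b"
  shows "emeasure (interval_measure F) {a<..b} =
           (if interval_measure_exact F then ennreal (F b - F a) else 0)"
proof (cases "interval_measure_exact F")
  case True then show ?thesis using assms by (simp add: interval_measure_exact_def)
next
  case False
  let ?I = "{(a, b). a \<le> (b::real)}" and ?G = "\<lambda>(a, b). {a<..b::real}"
    and ?m = "\<lambda>(a, b). ennreal (F b - F a)"
  have no_measure: "\<not> (\<exists>\<mu>'. (\<forall>i\<in>?I. \<mu>' (?G i) = ?m i) \<and>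
                      measure_space UNIV (sigma_sets UNIV (?G ` ?I)) \<mu>')"
  proof
    assume "\<exists>\<mu>'. (\<forall>i\<in>?I. \<mu>' (?G i) = ?m i) \<and> measure_space UNIV (sigma_sets UNIV (?G ` ?I)) \<mu>'"
    then obtain \<mu>' where eq: "\<forall>i\<in>?I. \<mu>' (?G i) = ?m i"
      and ms: "measure_space UNIV (sigma_sets UNIV (?G ` ?I)) \<mu>'" by blast
    have sets: "sets (interval_measure F) = sigma_sets UNIV (?G ` ?I)"
      unfolding interval_measure_def by (rule sets_extend_measure) auto
    have "interval_measure_exact F"
      unfolding interval_measure_exact_def
    proof (intro allI impI)
      fix a b :: real assume "a \<le> b"
      show "emeasure (interval_measure F) {a<..b} = ennreal (F b - F a)"
        using emeasure_extend_measure_Pair[OF interval_measure_def, where \<mu>'=\<mu>' and i=a and j=b]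
          eq ms \<open>a \<le> b\<close> sets
        by (auto simp: measure_space_def)
    qed
    with False show False by simp
  qed
  have M: "interval_measure F = measure_of UNIV (?G ` ?I) (\<lambda>_. 0)"
    unfolding interval_measure_def extend_measure_def using no_measure by (simp only: if_not_P) simp
  have "emeasure (interval_measure F) {a<..b} = 0"
    using measure_space_0[of "?G ` ?I" UNIV]
    by (intro emeasure_measure_of[OF M]) (auto simp: M measure_space_def assms intro!: sigma_sets.Basic)
  with False show ?thesis by simp
qed

lemma vimage_affine_Ioc:
  fixes c d :: real assumes "c > 0"
  shows "(\<lambda>u. (u - d) / c) -` {a<..b} = {c * a + d<..c * b + d}"
  using assms by (auto simp: field_simps)

lemma interval_measure_exact_affine:
  fixes c d :: real assumes c: "c > 0" and F: "interval_measure_exact F"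
  shows "interval_measure_exact (\<lambda>s. F (c * s + d))"
proof -
  let ?N = "distr (interval_measure F) borel (\<lambda>u. (u - d) / c)"
  have N_Ioc: "emeasure ?N {a<..b} = ennreal (F (c * b + d) - F (c * a + d))" if "a \<le> b" for a b
  proof -
    have "emeasure ?N {a<..b} = emeasure (interval_measure F) {c * a + d<..c * b + d}"
      by (subst emeasure_distr) (auto simp: vimage_affine_Ioc[OF c])
    also have "\<dots> = ennreal (F (c * b + d) - F (c * a + d))"
      using F c that by (simp add: interval_measure_exact_def mult_left_mono)
    finally show ?thesis .
  qed
  have sets: "sets (interval_measure (\<lambda>s. F (c * s + d))) = sets ?N" by simp
  show ?thesis unfolding interval_measure_exact_def
  proof (intro allI impI)
    fix a b :: real assume ab: "a \<le> b"
    show "emeasure (interval_measure (\<lambda>s. F (c * s + d))) {a<..b} = ennreal (F (c * b + d) - F (c * a + d))"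
      using emeasure_extend_measure_Pair[OF interval_measure_def, where \<mu>'="emeasure ?N" and i=a and j=b]
        N_Ioc ab measure_space[of ?N] sets
      by (auto simp: measure_space_def)
  qed
qed

lemma interval_measure_exact_affine_iff:
  fixes c d :: real assumes c: "c > 0"
  shows "interval_measure_exact (\<lambda>s. F (c * s + d)) \<longleftrightarrow> interval_measure_exact F"
proof
  assume "interval_measure_exact (\<lambda>s. F (c * s + d))"
  from interval_measure_exact_affine[OF _ this, of "1/c" "-d/c"] c
  have "interval_measure_exact (\<lambda>s. F (c * (1/c * s + - d / c) + d))" by simp
  moreover have "(\<lambda>s. F (c * (1/c * s + - d / c) + d)) = F"
    using c by (auto simp: field_simps)
  ultimately show "interval_measure_exact F" by simp
qed (rule interval_measure_exact_affine[OF c])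

lemma interval_measure_affine:
  fixes c d :: real assumes c: "c > 0"
  shows "interval_measure (\<lambda>s. F (c * s + d)) = distr (interval_measure F) borel (\<lambda>u. (u - d) / c)"
proof (rule measure_eqI_generator_eq[where E="range (\<lambda>(a, b). {a<..b::real})" and \<Omega>=UNIV
      and A="\<lambda>i. {- real i<..real i}"])
  show "Int_stable (range (\<lambda>(a, b). {a<..b::real}))"
  proof (rule Int_stableI)
    fix A B assume "A \<in> range (\<lambda>(a, b). {a<..b::real})" "B \<in> range (\<lambda>(a, b). {a<..b::real})"
    then obtain a b c d where "A = {a<..b}" "B = {c<..d}" by auto
    moreover have "{a<..b} \<inter> {c<..d} = {max a c<..min b d}" by auto
    ultimately show "A \<inter> B \<in> range (\<lambda>(a, b). {a<..b::real})" by auto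
  qed
  show "range (\<lambda>(a, b). {a<..b::real}) \<subseteq> Pow UNIV" by auto
  show "sets (interval_measure (\<lambda>s. F (c * s + d))) = sigma_sets UNIV (range (\<lambda>(a, b). {a<..b::real}))"
    by (simp add: borel_sigma_sets_Ioc)
  show "sets (distr (interval_measure F) borel (\<lambda>u. (u - d) / c)) =
          sigma_sets UNIV (range (\<lambda>(a, b). {a<..b::real}))"
    by (simp add: borel_sigma_sets_Ioc)
  show "range (\<lambda>i. {- real i<..real i}) \<subseteq> range (\<lambda>(a, b). {a<..b::real})" by auto
  show "(\<Union>i. {- real i<..real i}) = UNIV"
  proof safe
    fix x :: real
    obtain n :: nat where "\<bar>x\<bar> < n" using reals_Archimedean2 by blast
    then show "x \<in> (\<Union>i. {- real i<..real i})" by (auto intro!: exI[of _ n])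
  qed auto
  show "emeasure (interval_measure (\<lambda>s. F (c * s + d))) {- real i<..real i} \<noteq> \<infinity>" for i
    by (subst emeasure_interval_measure_Ioc_cases) auto
  fix X assume "X \<in> range (\<lambda>(a, b). {a<..b::real})"
  then obtain a b where X: "X = {a<..b}" by auto
  show "emeasure (interval_measure (\<lambda>s. F (c * s + d))) X =
          emeasure (distr (interval_measure F) borel (\<lambda>u. (u - d) / c)) X"
  proof (cases "a \<le> b")
    case True
    have "emeasure (distr (interval_measure F) borel (\<lambda>u. (u - d) / c)) X
        = emeasure (interval_measure F) {c * a + d<..c * b + d}"
      unfolding X by (subst emeasure_distr) (auto simp: vimage_affine_Ioc[OF c])
    also have "\<dots> = (if interval_measure_exact F then ennreal (F (c * b + d) - F (c * a + d)) else 0)"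
      using c True by (intro emeasure_interval_measure_Ioc_cases) (simp add: mult_left_mono)
    also have "\<dots> = emeasure (interval_measure (\<lambda>s. F (c * s + d))) X"
      unfolding X by (subst emeasure_interval_measure_Ioc_cases[OF True])
        (simp add: interval_measure_exact_affine_iff[OF c])
    finally show ?thesis by simp
  next
    case False then show ?thesis by (simp add: X)
  qed
qed

lemma curve_length_affine:
  fixes c d :: real assumes c: "c > 0"
  shows "curve_length (\<lambda>s. g (c * s + d)) a b = curve_length g (c * a + d) (c * b + d)"
proof -
  let ?S1 = "{(n, t :: nat \<Rightarrow> real). t 0 = a \<and> t n = b \<and> (\<forall>i<n. t i \<le> t (Suc i))}"
  let ?S2 = "{(n, t :: nat \<Rightarrow> real). t 0 = c * a + d \<and> t n = c * b + d \<and> (\<forall>i<n. t i \<le> t (Suc i))}"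
  have "(SUP (n, t) \<in> ?S1. (\<Sum>i<n. ennreal (dist (g (c * t i + d)) (g (c * t (Suc i) + d)))))
      \<le> (SUP (n, t) \<in> ?S2. (\<Sum>i<n. ennreal (dist (g (t i)) (g (t (Suc i))))))"
  proof (rule SUP_least)
    fix p assume "p \<in> ?S1"
    then obtain n t where p: "p = (n, t)" and h: "t 0 = a" "t n = b" "\<forall>i<n. t i \<le> t (Suc i)" by auto
    show "(case p of (n, t) \<Rightarrow> \<Sum>i<n. ennreal (dist (g (c * t i + d)) (g (c * t (Suc i) + d))))
      \<le> (SUP (n, t) \<in> ?S2. (\<Sum>i<n. ennreal (dist (g (t i)) (g (t (Suc i))))))"
      by (rule SUP_upper2[of "(n, \<lambda>i. c * t i + d)"]) (use h c p in \<open>auto intro: mult_left_mono\<close>)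
  qed
  moreover have "(SUP (n, t) \<in> ?S2. (\<Sum>i<n. ennreal (dist (g (t i)) (g (t (Suc i))))))
      \<le> (SUP (n, t) \<in> ?S1. (\<Sum>i<n. ennreal (dist (g (c * t i + d)) (g (c * t (Suc i) + d)))))"
  proof (rule SUP_least)
    fix p assume "p \<in> ?S2"
    then obtain n t where p: "p = (n, t)"
      and h: "t 0 = c * a + d" "t n = c * b + d" "\<forall>i<n. t i \<le> t (Suc i)" by auto
    have e: "c * ((t i - d) / c) + d = t i" for i using c by (simp add: field_simps)
    show "(case p of (n, t) \<Rightarrow> \<Sum>i<n. ennreal (dist (g (t i)) (g (t (Suc i)))))
      \<le> (SUP (n, t) \<in> ?S1. (\<Sum>i<n. ennreal (dist (g (c * t i + d)) (g (c * t (Suc i) + d)))))"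
      by (rule SUP_upper2[of "(n, \<lambda>i. (t i - d) / c)"]) (use h c p in \<open>auto simp: e divide_right_mono\<close>)
  qed
  ultimately show ?thesis unfolding curve_length_def by (rule antisym)
qed

lemma line_integral_seg_affine:
  fixes c d :: real assumes c: "c > 0"
    and meas: "(\<lambda>u. indicator {c * a + d..c * b + d} u * \<rho> (g u)) \<in> borel_measurable borel"
  shows "line_integral_seg \<rho> (\<lambda>s. g (c * s + d)) a b = line_integral_seg \<rho> g (c * a + d) (c * b + d)"
proof -
  define Fg where "Fg u = enn2real (curve_length g (c * a + d) (max (c * a + d) (min (c * b + d) u)))" for u
  have "c * max a (min b s) + d = max (c * a + d) (min (c * b + d) (c * s + d))" for s
    using c by (auto simp: max_def min_def mult_left_mono)
  then have F: "(\<lambda>s. enn2real (curve_length (\<lambda>s. g (c * s + d)) a (max a (min b s)))) = (\<lambda>s. Fg (c * s + d))"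
    by (simp add: curve_length_affine[OF c] Fg_def)
  have ind: "indicator {a..b} t = (indicator {c * a + d..c * b + d} (c * t + d) :: ennreal)" for t
    using c by (auto simp: indicator_def mult_le_cancel_left_pos)
  have "line_integral_seg \<rho> (\<lambda>s. g (c * s + d)) a b
     = (\<integral>\<^sup>+ t. indicator {c * a + d..c * b + d} (c * t + d) * \<rho> (g (c * t + d))
          \<partial>distr (interval_measure Fg) borel (\<lambda>u. (u - d) / c))"
    unfolding line_integral_seg_def F interval_measure_affine[OF c] ind ..
  also have "\<dots> = (\<integral>\<^sup>+ u. indicator {c * a + d..c * b + d} (c * ((u - d) / c) + d) *
                          \<rho> (g (c * ((u - d) / c) + d)) \<partial>interval_measure Fg)"
    using meas by (subst nn_integral_distr) auto
  also have "\<dots> = line_integral_seg \<rho> g (c * a + d) (c * b + d)"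
    unfolding line_integral_seg_def Fg_def using c by simp
  finally show ?thesis .
qed

lemma borel_measurable_indicator_comp_continuous:
  fixes h :: "real \<Rightarrow> 'b::metric_space" and \<rho> :: "'b \<Rightarrow> ennreal"
  assumes h: "continuous_on {p..q} h" and \<rho>: "\<rho> \<in> borel_measurable borel"
  shows "(\<lambda>u. indicator {p..q} u * \<rho> (h u)) \<in> borel_measurable borel"
proof -
  have "h \<in> borel_measurable (restrict_space borel {p..q})"
    using h by (rule borel_measurable_continuous_on_restrict)
  then have "(\<lambda>u. \<rho> (h u)) \<in> borel_measurable (restrict_space borel {p..q})"
    using \<rho> by (rule measurable_compose)
  then have "(\<lambda>u. \<rho> (h u) * indicator {p..q} u) \<in> borel_measurable borel"
    by (subst borel_measurable_restrict_space_iff_ennreal[symmetric]) auto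
  then show ?thesis by (simp add: mult.commute)
qed

lemma affine_image_Icc_subset:
  fixes c d :: real assumes "0 < c" "{p..q} \<subseteq> {0..1}" "p \<le> q"
  shows "{c * p + d..c * q + d} \<subseteq> {d..c + d}"
proof -
  have "0 \<le> p" "q \<le> 1" using assms by auto
  then have "0 \<le> c * p" "c * q \<le> c" using assms by (auto simp: mult_le_cancel_left1)
  then show ?thesis by auto
qed

lemma loc_rectifiable_affine_subcurve:
  fixes g :: "real \<Rightarrow> 'b::metric_space" and c d :: real
  assumes g: "loc_rectifiable I g" and c: "0 < c" and sub: "{d..c + d} \<subseteq> I"
  shows "loc_rectifiable {0..1} (\<lambda>s. g (c * s + d))"
  unfolding loc_rectifiable_def
proof (intro conjI allI impI)
  have "(\<lambda>s. c * s + d) ` {0..1} \<subseteq> I"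
  proof (rule image_subsetI)
    fix s :: real assume "s \<in> {0..1}"
    then have "c * s + d \<in> {c * 0 + d..c * 1 + d}"
      using c by (auto simp: mult_left_mono)
    then show "c * s + d \<in> I" using sub by auto
  qed
  moreover have "continuous_on I g" using g by (simp add: loc_rectifiable_def)
  ultimately show "continuous_on {0..1} (\<lambda>s. g (c * s + d))"
    by (intro continuous_on_compose2[of I g _ "\<lambda>s. c * s + d"] continuous_intros)
next
  fix p q :: real assume pq: "p \<le> q \<and> {p..q} \<subseteq> {0..1}"
  then have "{c * p + d..c * q + d} \<subseteq> {d..c + d}"
    by (intro affine_image_Icc_subset c) auto
  then have "{c * p + d..c * q + d} \<subseteq> I" using sub by (rule subset_trans)
  moreover have "c * p + d \<le> c * q + d" using pq c by (simp add: mult_left_mono)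
  ultimately have "curve_length g (c * p + d) (c * q + d) < \<infinity>"
    using g by (simp add: loc_rectifiable_def)
  then show "curve_length (\<lambda>s. g (c * s + d)) p q < \<infinity>"
    by (simp add: curve_length_affine[OF c])
qed
lemma line_integral_affine_subcurve_le:
  fixes g :: "real \<Rightarrow> 'b::metric_space" and c d :: real
  assumes g: "continuous_on I g" and c: "0 < c" and sub: "{d..c + d} \<subseteq> I"
    and \<rho>: "\<rho> \<in> borel_measurable borel"
  shows "line_integral {0..1} \<rho> (\<lambda>s. g (c * s + d)) \<le> line_integral I \<rho> g"
  unfolding line_integral_def
proof (rule SUP_least)
  fix pq assume "pq \<in> {(p, q). p \<le> q \<and> {p..q} \<subseteq> {0..(1::real)}}"
  then obtain p q where pq: "pq = (p, q)" "p \<le> q" "{p..q} \<subseteq> {0..1}" by auto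
  have le: "c * p + d \<le> c * q + d" using c pq(2) by (simp add: mult_left_mono)
  have sub': "{c * p + d..c * q + d} \<subseteq> I"
    using affine_image_Icc_subset[OF c pq(3,2)] sub by blast
  have "line_integral_seg \<rho> (\<lambda>s. g (c * s + d)) p q = line_integral_seg \<rho> g (c * p + d) (c * q + d)"
    using borel_measurable_indicator_comp_continuous[OF continuous_on_subset[OF g sub'] \<rho>]
    by (rule line_integral_seg_affine[OF c])
  also have "\<dots> \<le> (SUP (a, b)\<in>{(a, b). a \<le> b \<and> {a..b} \<subseteq> I}. line_integral_seg \<rho> g a b)"
    by (rule SUP_upper2[of "(c * p + d, c * q + d)"]) (use le sub' in auto)
  finally show "(case pq of (a, b) \<Rightarrow> line_integral_seg \<rho> (\<lambda>s. g (c * s + d)) a b)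
      \<le> (SUP (a, b)\<in>{(a, b). a \<le> b \<and> {a..b} \<subseteq> I}. line_integral_seg \<rho> g a b)"
    by (simp add: pq)
qed

lemma first_hitting_time:
  fixes h :: "real \<Rightarrow> real"
  assumes cont: "continuous_on {p..q} h" and pq: "p \<le> q" and hp: "h p < r" and hq: "r \<le> h q"
  shows "\<exists>b\<in>{p<..q}. h b = r \<and> (\<forall>t\<in>{p..<b}. h t < r)"
proof -
  define K where "K = {p..q} \<inter> h -` {r..}"
  have "closed K" unfolding K_def by (rule continuous_closed_preimage[OF cont]) auto
  moreover have "q \<in> K" using hq pq unfolding K_def by auto
  moreover have bdd: "bdd_below K" unfolding K_def by (rule bdd_belowI[of _ p]) auto
  ultimately have bK: "Inf K \<in> K" by (intro closed_contains_Inf) auto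
  define b where "b = Inf K"
  have below: "h t < r" if "t \<in> {p..<b}" for t
  proof (rule ccontr)
    assume "\<not> h t < r"
    then have "t \<in> K" using that bK by (auto simp: K_def b_def)
    then have "b \<le> t" unfolding b_def by (rule cInf_lower[OF _ bdd])
    with that show False by simp
  qed
  have b: "p \<le> b" "b \<le> q" "r \<le> h b" using bK by (auto simp: K_def b_def)
  then obtain x where x: "p \<le> x" "x \<le> b" "h x = r"
    using IVT'[of h p r b] hp continuous_on_subset[OF cont] by fastforce
  then have "h b = r" using below[of x] b by force
  moreover have "p \<noteq> b" using hp \<open>h b = r\<close> by auto
  ultimately show ?thesis using b below by (intro bexI[of _ b]) auto
qed

lemma last_exit_time:
  fixes h :: "real \<Rightarrow> real"
  assumes cont: "continuous_on {p..q} h" and pq: "p \<le> q" and hp: "h p \<le> r" and hq: "r < h q"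
  shows "\<exists>a\<in>{p..<q}. h a = r \<and> (\<forall>t\<in>{a<..q}. r < h t)"
proof -
  have "continuous_on {p..q} (\<lambda>t. - h (p + q - t))"
    by (intro continuous_intros continuous_on_compose2[OF cont]) auto
  then obtain b where b: "b \<in> {p<..q}" "- h (p + q - b) = - r"
    and below: "\<forall>t\<in>{p..<b}. - h (p + q - t) < - r"
    using first_hitting_time[of p q "\<lambda>t. - h (p + q - t)" "- r"] pq hp hq by auto
  have "r < h t" if "t \<in> {p + q - b<..q}" for t
    using below[rule_format, of "p + q - t"] that by auto
  then show ?thesis using b by (intro bexI[of _ "p + q - b"]) auto
qed

lemma crossing_subinterval:
  fixes h :: "real \<Rightarrow> real"
  assumes cont: "continuous_on {p..q} h" and pq: "p \<le> q"
    and hp: "h p < r1" and hq: "r2 < h q" and r: "r1 < r2"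
  shows "\<exists>a b. p \<le> a \<and> a < b \<and> b \<le> q \<and> h a = r1 \<and> h b = r2 \<and>
           (\<forall>t\<in>{a<..<b}. r1 < h t \<and> h t < r2)"
proof -
  obtain b where b: "b \<in> {p<..q}" "h b = r2" and below: "\<forall>t\<in>{p..<b}. h t < r2"
    using first_hitting_time[OF cont pq, of r2] hp hq r by auto
  obtain a where a: "a \<in> {p..<b}" "h a = r1" and above: "\<forall>t\<in>{a<..b}. r1 < h t"
    using last_exit_time[OF continuous_on_subset[OF cont], of p b r1] b hp r by auto
  show ?thesis using a b below above by (intro exI[of _ a] exI[of _ b]) auto
qed

lemma epowr_ennreal: "0 \<le> r \<Longrightarrow> epowr (ennreal r) p = ennreal (r powr p)"
  by (simp add: epowr_def)

lemma epowr_top: "p > 0 \<Longrightarrow> epowr top p = top"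
  by (simp add: epowr_def)

lemma epowr_less_epowr_iff:
  assumes "p > 0"
  shows "epowr x p < epowr y p \<longleftrightarrow> x < y"
proof (cases x rule: ennreal_cases)
  case (real r)
  show ?thesis
  proof (cases y rule: ennreal_cases)
    case (real s)
    have "r powr p < s powr p \<longleftrightarrow> r < s"
      using \<open>0 \<le> r\<close> \<open>0 \<le> s\<close> assms
      by (metis not_less powr_less_mono2 powr_mono2 order.strict_implies_order)
    then show ?thesis using \<open>x = ennreal r\<close> \<open>0 \<le> r\<close> real
      by (simp add: epowr_ennreal ennreal_less_iff)
  qed (use real assms in \<open>simp_all add: epowr_ennreal epowr_top\<close>)
qed (use assms in \<open>simp add: epowr_top\<close>)

lemma epowr_mono:
  assumes "p > 0" and "x \<le> y"
  shows "epowr x p \<le> epowr y p"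
  using assms epowr_less_epowr_iff[of p y x] by (simp add: not_less[symmetric])

lemma epowr_SUP_le:
  fixes a :: "nat \<Rightarrow> ennreal" assumes p: "p > 0"
  shows "epowr (SUP m. a m) p \<le> (SUP m. epowr (a m) p)"
proof (rule dense_le)
  fix w assume w: "w < epowr (SUP m. a m) p"
  then obtain w' where w': "w = ennreal w'" "0 \<le> w'" by (cases w rule: ennreal_cases) auto
  define t where "t = ennreal (w' powr (1 / p))"
  have t: "epowr t p = w" using w' p by (simp add: t_def epowr_ennreal powr_powr)
  then have "t < (SUP m. a m)" using w epowr_less_epowr_iff[OF p, of t] by simp
  then obtain m where "t < a m" by (auto simp: less_SUP_iff)
  then have "w \<le> epowr (a m) p" using t epowr_less_epowr_iff[OF p] by (metis less_imp_le)
  also have "\<dots> \<le> (SUP m. epowr (a m) p)" by (rule SUP_upper) simp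
  finally show "w \<le> (SUP m. epowr (a m) p)" .
qed

lemma epowr_mult_ennreal:
  assumes c: "c > 0" and p: "p > 0"
  shows "epowr (x * ennreal c) p = epowr x p * ennreal (c powr p)"
proof (cases x rule: ennreal_cases)
  case (real r)
  then show ?thesis using c
    by (simp add: epowr_ennreal powr_mult flip: ennreal_mult)
qed (use c p in \<open>simp add: epowr_top ennreal_top_mult\<close>)

lemma borel_measurable_epowr[measurable]:
  assumes f: "f \<in> borel_measurable M"
  shows "(\<lambda>x. epowr (f x) p) \<in> borel_measurable M"
proof -
  have "(\<lambda>x. ennreal (enn2real (f x) powr p)) \<in> borel_measurable M"
    using f by measurable
  moreover have "{x \<in> space M. f x = top} \<in> sets M" using f by measurable
  ultimately show ?thesis unfolding epowr_def by (intro measurable_If) auto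
qed

lemma ennreal_le_suminf: "f m \<le> (\<Sum>m. f m :: ennreal)"
  using ennreal_suminf_lessD linorder_not_less by blast

lemma nn_integral_mult_const_le:
  fixes g :: "'a \<Rightarrow> ennreal"
  assumes k: "k > 0"
  shows "(\<integral>\<^sup>+ x. g x * ennreal k \<partial>M) \<le> (\<integral>\<^sup>+ x. g x \<partial>M) * ennreal k"
  unfolding nn_integral_def[of M "\<lambda>x. g x * ennreal k"]
proof (rule SUP_least)
  fix s assume s: "s \<in> {s. simple_function M s \<and> s \<le> (\<lambda>x. g x * ennreal k)}"
  let ?t = "\<lambda>x. s x * ennreal (1 / k)"
  have t: "simple_function M ?t" using s by (auto intro: simple_function_mult simple_function_const)
  have s_eq: "s x = ?t x * ennreal k" for x
    using k by (simp add: mult.assoc flip: ennreal_mult)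
  have "?t x \<le> g x" for x
  proof -
    have "?t x \<le> g x * ennreal k * ennreal (1 / k)"
      using s by (intro mult_right_mono) (auto simp: le_fun_def)
    also have "\<dots> = g x" using k by (simp add: mult.assoc flip: ennreal_mult)
    finally show ?thesis .
  qed
  then have "(\<integral>\<^sup>+ x. ?t x \<partial>M) * ennreal k \<le> (\<integral>\<^sup>+ x. g x \<partial>M) * ennreal k"
    by (intro mult_right_mono nn_integral_mono) auto
  moreover have "integral\<^sup>S M s = (\<integral>\<^sup>+ x. ?t x * ennreal k \<partial>M)"
    using s by (simp add: nn_integral_eq_simple_integral flip: s_eq)
  moreover have "(\<integral>\<^sup>+ x. ?t x * ennreal k \<partial>M) = (\<integral>\<^sup>+ x. ?t x \<partial>M) * ennreal k"
    by (rule nn_integral_multc[OF borel_measurable_simple_function[OF t]])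
  ultimately show "integral\<^sup>S M s \<le> (\<integral>\<^sup>+ x. g x \<partial>M) * ennreal k" by simp
qed

subsection \<open>Modulus of curve families\<close>

lemma modulus_mono_admissible:
  assumes "\<And>\<rho>. admissible J H \<rho> \<Longrightarrow> admissible I G \<rho>"
  shows "modulus M p I G \<le> modulus M p J H"
  unfolding modulus_def by (rule INF_superset_mono) (auto intro: assms)

lemma modulus_mono: "G \<subseteq> H \<Longrightarrow> modulus M p I G \<le> modulus M p I H"
  by (rule modulus_mono_admissible) (auto simp: admissible_def)

lemma line_integral_mono:
  assumes "\<And>y. \<rho> y \<le> \<rho>' y"
  shows "line_integral I \<rho> g \<le> line_integral I \<rho>' g"
  unfolding line_integral_def line_integral_seg_def
  by (rule SUP_subset_mono) (auto intro!: nn_integral_mono mult_left_mono assms)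

lemma admissible_Union_SUP:
  fixes \<rho> :: "nat \<Rightarrow> 'a::metric_space \<Rightarrow> ennreal"
  assumes "\<And>m. admissible I (G m) (\<rho> m)"
  shows "admissible I (\<Union>m. G m) (\<lambda>y. SUP m. \<rho> m y)"
  unfolding admissible_def
proof (intro conjI ballI impI)
  show "(\<lambda>y. SUP m. \<rho> m y) \<in> borel_measurable borel"
    using assms unfolding admissible_def by (intro borel_measurable_SUP) (auto intro: countableI_type)
  fix g assume "g \<in> (\<Union>m. G m)" and g: "loc_rectifiable I g"
  then obtain m where "g \<in> G m" by blast
  then have "1 \<le> line_integral I (\<rho> m) g" using assms[of m] g by (simp add: admissible_def)
  also have "\<dots> \<le> line_integral I (\<lambda>y. SUP m. \<rho> m y) g"
    by (rule line_integral_mono) (rule SUP_upper, simp)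
  finally show "1 \<le> line_integral I (\<lambda>y. SUP m. \<rho> m y) g" .
qed

lemma admissible_below_modulus:
  assumes "modulus M p I G < \<infinity>" and "0 < d"
  shows "\<exists>\<rho>. admissible I G \<rho> \<and> (\<integral>\<^sup>+ y. epowr (\<rho> y) p \<partial>M) < modulus M p I G + ennreal d"
proof -
  have "modulus M p I G < modulus M p I G + ennreal d"
    using assms by (metis add.right_neutral ennreal_add_left_cancel_less ennreal_less_zero_iff less_top)
  then show ?thesis unfolding modulus_def INF_less_iff by blast
qed

lemma nn_integral_epowr_SUP_le:
  fixes \<rho> :: "nat \<Rightarrow> 'a \<Rightarrow> ennreal"
  assumes p: "p > 0" and \<rho>: "\<And>m. \<rho> m \<in> borel_measurable M"
  shows "(\<integral>\<^sup>+ y. epowr (SUP m. \<rho> m y) p \<partial>M) \<le> (\<Sum>m. \<integral>\<^sup>+ y. epowr (\<rho> m y) p \<partial>M)"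
proof -
  have "(\<integral>\<^sup>+ y. epowr (SUP m. \<rho> m y) p \<partial>M) \<le> (\<integral>\<^sup>+ y. (\<Sum>m. epowr (\<rho> m y) p) \<partial>M)"
  proof (rule nn_integral_mono)
    fix y
    have "epowr (SUP m. \<rho> m y) p \<le> (SUP m. epowr (\<rho> m y) p)" by (rule epowr_SUP_le[OF p])
    also have "\<dots> \<le> (\<Sum>m. epowr (\<rho> m y) p)" by (rule SUP_least) (rule ennreal_le_suminf)
    finally show "epowr (SUP m. \<rho> m y) p \<le> (\<Sum>m. epowr (\<rho> m y) p)" .
  qed
  also have "\<dots> = (\<Sum>m. \<integral>\<^sup>+ y. epowr (\<rho> m y) p \<partial>M)"
    using \<rho> by (intro nn_integral_suminf) measurable
  finally show ?thesis .
qed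

lemma modulus_Union_le:
  fixes G :: "nat \<Rightarrow> (real \<Rightarrow> 'b::metric_space) set"
  assumes p: "p > 0" and M: "sets M = sets borel"
  shows "modulus M p I (\<Union>m. G m) \<le> (\<Sum>m. modulus M p I (G m))"
proof (cases "\<exists>m. modulus M p I (G m) = \<infinity>")
  case True
  then obtain m where "modulus M p I (G m) = \<infinity>" by blast
  then have "(\<Sum>m. modulus M p I (G m)) = \<infinity>"
    using ennreal_le_suminf[of "\<lambda>m. modulus M p I (G m)" m] by (simp add: top_unique)
  then show ?thesis by simp
next
  case False
  show ?thesis
  proof (rule ennreal_le_epsilon)
    fix \<delta> :: real assume \<delta>: "0 < \<delta>"
    define d where "d m = \<delta> * (1 / 2) ^ Suc m" for m
    have d: "0 < d m" for m using \<delta> by (simp add: d_def)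
    have "\<forall>m. \<exists>\<rho>. admissible I (G m) \<rho> \<and>
        (\<integral>\<^sup>+ y. epowr (\<rho> y) p \<partial>M) < modulus M p I (G m) + ennreal (d m)"
      using False by (intro allI admissible_below_modulus d) (simp add: less_top)
    then obtain \<rho> where "\<forall>m. admissible I (G m) (\<rho> m) \<and>
        (\<integral>\<^sup>+ y. epowr (\<rho> m y) p \<partial>M) < modulus M p I (G m) + ennreal (d m)"
      by (metis choice)
    then have adm: "\<And>m. admissible I (G m) (\<rho> m)"
      and small: "\<And>m. (\<integral>\<^sup>+ y. epowr (\<rho> m y) p \<partial>M) < modulus M p I (G m) + ennreal (d m)"
      by auto
    have meas: "\<rho> m \<in> borel_measurable M" for m
      using adm[of m] by (simp add: admissible_def measurable_cong_sets[OF M refl])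
    have "modulus M p I (\<Union>m. G m) \<le> (\<integral>\<^sup>+ y. epowr (SUP m. \<rho> m y) p \<partial>M)"
      unfolding modulus_def by (rule INF_lower) (simp add: admissible_Union_SUP[OF adm])
    also have "\<dots> \<le> (\<Sum>m. \<integral>\<^sup>+ y. epowr (\<rho> m y) p \<partial>M)"
      by (rule nn_integral_epowr_SUP_le[OF p meas])
    also have "\<dots> \<le> (\<Sum>m. modulus M p I (G m) + ennreal (d m))"
      by (intro suminf_le less_imp_le small) auto
    also have "\<dots> = (\<Sum>m. modulus M p I (G m)) + ennreal \<delta>"
    proof -
      have "(\<lambda>m. d m) sums \<delta>"
        using sums_mult[OF power_half_series, of \<delta>] by (simp add: d_def)
      then have "(\<lambda>m. ennreal (d m)) sums ennreal \<delta>"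
        using d \<delta> by (simp add: less_imp_le)
      then have "(\<Sum>m. ennreal (d m)) = ennreal \<delta>" by (rule sums_unique[symmetric])
      then show ?thesis by (simp add: suminf_add[symmetric] summableI)
    qed
    finally show "modulus M p I (\<Union>m. G m) \<le> (\<Sum>m. modulus M p I (G m)) + ennreal \<delta>" .
  qed
qed

subsection \<open>Curves accumulating at the puncture\<close>

definition annulus_curves :: "'a::metric_space set \<Rightarrow> 'a \<Rightarrow> real \<Rightarrow> real \<Rightarrow> (real \<Rightarrow> 'a) set" where
  "annulus_curves D x0 r1 r2 =
     {\<gamma> \<in> curves_between (sphere_at x0 r1) (sphere_at x0 r2) (annulus x0 r1 r2). \<gamma> ` {0..1} \<subseteq> D - {x0}}"

definition curves_accumulating_at :: "'a::metric_space set \<Rightarrow> 'a \<Rightarrow> (real \<Rightarrow> 'a) set" where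
  "curves_accumulating_at D x0 =
     {\<gamma>. continuous_on {0<..<1} \<gamma> \<and> \<gamma> ` {0<..<1} \<subseteq> D - {x0} \<and>
          (\<exists>t :: nat \<Rightarrow> real. (\<forall>k. t k \<in> {0<..<1}) \<and> t \<longlonglongrightarrow> 0 \<and> (\<lambda>k. \<gamma> (t k)) \<longlonglongrightarrow> x0)}"

lemma affine_subarc_in_annulus_curves:
  assumes \<gamma>: "continuous_on {0<..<1} \<gamma>" "\<gamma> ` {0<..<1} \<subseteq> D - {x0}"
    and ab: "0 < a" "a < b" "b < 1" "dist (\<gamma> a) x0 = r1" "dist (\<gamma> b) x0 = r2"
    and between: "\<forall>u\<in>{a<..<b}. r1 < dist (\<gamma> u) x0 \<and> dist (\<gamma> u) x0 < r2"
  shows "(\<lambda>u. \<gamma> ((b - a) * u + a)) \<in> annulus_curves D x0 r1 r2"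
proof -
  have into_ab: "(b - a) * u + a \<in> {a..b}" if "u \<in> {0..1}" for u
  proof -
    have "(b - a) * u \<le> b - a" "0 \<le> (b - a) * u"
      using that ab mult_left_mono[of u 1 "b - a"] by auto
    then show ?thesis unfolding atLeastAtMost_iff by linarith
  qed
  have into_ab_open: "(b - a) * u + a \<in> {a<..<b}" if "u \<in> {0<..<1}" for u
  proof -
    have "(b - a) * u < b - a" "0 < (b - a) * u"
      using that ab mult_strict_left_mono[of u 1 "b - a"] by auto
    then show ?thesis unfolding greaterThanLessThan_iff by linarith
  qed
  have sub: "{a..b} \<subseteq> {0<..<1}" using ab by auto
  have "continuous_on {0..1} (\<lambda>u. \<gamma> ((b - a) * u + a))"
    by (rule continuous_on_compose2[OF continuous_on_subset[OF \<gamma>(1) sub]])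
       (auto intro!: continuous_intros into_ab)
  moreover have "(\<lambda>u. \<gamma> ((b - a) * u + a)) ` {0..1} \<subseteq> D - {x0}"
    using \<gamma>(2) sub into_ab by blast
  moreover have "\<forall>u\<in>{0<..<1}. \<gamma> ((b - a) * u + a) \<in> annulus x0 r1 r2"
    using between into_ab_open by (auto simp: annulus_def)
  ultimately show ?thesis
    using ab by (simp add: annulus_curves_def curves_between_def sphere_at_def)
qed

lemma crossing_subarc:
  assumes \<gamma>: "\<gamma> \<in> curves_accumulating_at D x0" and r: "0 < r1" "r1 < r2"
    and s: "s \<in> {0<..<1}" "r2 < dist (\<gamma> s) x0"
  shows "\<exists>a b. 0 < a \<and> a < b \<and> b < 1 \<and> (\<lambda>u. \<gamma> ((b - a) * u + a)) \<in> annulus_curves D x0 r1 r2"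
proof -
  obtain t where t: "\<forall>k. t k \<in> {0<..<1}" "t \<longlonglongrightarrow> 0" "(\<lambda>k. \<gamma> (t k)) \<longlonglongrightarrow> x0"
    and cont: "continuous_on {0<..<1} \<gamma>" and img: "\<gamma> ` {0<..<1} \<subseteq> D - {x0}"
    using \<gamma> by (auto simp: curves_accumulating_at_def)
  have "eventually (\<lambda>k. t k < s \<and> dist (\<gamma> (t k)) x0 < r1) sequentially"
    using order_tendstoD(2)[OF t(2), of s] t(3) s r unfolding tendsto_iff by (auto elim: eventually_conj)
  then obtain k where k: "t k < s" "dist (\<gamma> (t k)) x0 < r1"
    using eventually_happens'[OF sequentially_bot] by blast
  have "{t k..s} \<subseteq> {0<..<1}" using t(1)[rule_format, of k] s(1) by auto
  then have "continuous_on {t k..s} (\<lambda>u. dist (\<gamma> u) x0)"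
    by (intro continuous_intros continuous_on_subset[OF cont])
  then obtain a b where ab: "t k \<le> a" "a < b" "b \<le> s" "dist (\<gamma> a) x0 = r1" "dist (\<gamma> b) x0 = r2"
    and between: "\<forall>u\<in>{a<..<b}. r1 < dist (\<gamma> u) x0 \<and> dist (\<gamma> u) x0 < r2"
    using crossing_subinterval[of "t k" s "\<lambda>u. dist (\<gamma> u) x0" r1 r2] k s r by auto
  have "0 < a" "b < 1" using t(1)[rule_format, of k] ab s by auto
  with ab between show ?thesis
    by (intro exI[of _ a] exI[of _ b]) (auto intro!: affine_subarc_in_annulus_curves[OF cont img])
qed

lemma admissible_escaping_curves:
  assumes r: "0 < r1" "r1 < r2"
    and adm: "admissible {0..1} ((\<lambda>\<gamma>. f \<circ> \<gamma>) ` annulus_curves D x0 r1 r2) \<rho>"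
  shows "admissible {0<..<1}
           ((\<lambda>\<gamma>. f \<circ> \<gamma>) ` {\<gamma> \<in> curves_accumulating_at D x0. \<exists>s\<in>{0<..<1}. r2 < dist (\<gamma> s) x0}) \<rho>"
  unfolding admissible_def
proof (intro conjI ballI impI)
  show \<rho>: "\<rho> \<in> borel_measurable borel" using adm by (simp add: admissible_def)
  fix g assume "g \<in> (\<lambda>\<gamma>. f \<circ> \<gamma>) ` {\<gamma> \<in> curves_accumulating_at D x0. \<exists>s\<in>{0<..<1}. r2 < dist (\<gamma> s) x0}"
    and g: "loc_rectifiable {0<..<1} g"
  then obtain \<gamma> s where g_eq: "g = f \<circ> \<gamma>" and \<gamma>: "\<gamma> \<in> curves_accumulating_at D x0"
    and s: "s \<in> {0<..<1}" "r2 < dist (\<gamma> s) x0" by blast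
  obtain a b where ab: "0 < a" "a < b" "b < 1"
    and \<sigma>: "(\<lambda>u. \<gamma> ((b - a) * u + a)) \<in> annulus_curves D x0 r1 r2"
    using crossing_subarc[OF \<gamma> r s] by blast
  have sub: "{a..b - a + a} \<subseteq> {0<..<1}" and c: "0 < b - a" using ab by auto
  have "(\<lambda>u. g ((b - a) * u + a)) = f \<circ> (\<lambda>u. \<gamma> ((b - a) * u + a))" by (simp add: g_eq o_def)
  with \<sigma> have "(\<lambda>u. g ((b - a) * u + a)) \<in> (\<lambda>\<gamma>. f \<circ> \<gamma>) ` annulus_curves D x0 r1 r2" by blast
  then have "1 \<le> line_integral {0..1} \<rho> (\<lambda>u. g ((b - a) * u + a))"
    using adm loc_rectifiable_affine_subcurve[OF g c sub] by (auto simp: admissible_def)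
  also have "\<dots> \<le> line_integral {0<..<1} \<rho> g"
    using g by (intro line_integral_affine_subcurve_le[OF _ c sub \<rho>]) (simp add: loc_rectifiable_def)
  finally show "1 \<le> line_integral {0<..<1} \<rho> g" .
qed

lemma modulus_escaping_curves_le:
  assumes "0 < r1" "r1 < r2"
  shows "modulus M p {0<..<1}
           ((\<lambda>\<gamma>. f \<circ> \<gamma>) ` {\<gamma> \<in> curves_accumulating_at D x0. \<exists>s\<in>{0<..<1}. r2 < dist (\<gamma> s) x0})
         \<le> modulus M p {0..1} ((\<lambda>\<gamma>. f \<circ> \<gamma>) ` annulus_curves D x0 r1 r2)"
  using assms by (intro modulus_mono_admissible admissible_escaping_curves)

subsection \<open>The modulus estimate for ring mappings\<close>

lemma borel_measurable_mult_indicator_restrict: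
  fixes \<psi> :: "real \<Rightarrow> ennreal"
  assumes \<psi>: "\<psi> \<in> borel_measurable (restrict_space lebesgue S)" and S: "S \<in> sets lebesgue"
    and A: "A \<in> sets lebesgue" "A \<subseteq> S"
  shows "(\<lambda>t. \<psi> t * indicator A t) \<in> borel_measurable lebesgue"
proof -
  have "(\<lambda>t. \<psi> t * indicator S t) \<in> borel_measurable lebesgue"
    using \<psi> S by (subst borel_measurable_restrict_space_iff_ennreal[symmetric]) auto
  then have "(\<lambda>t. \<psi> t * indicator S t * indicator A t) \<in> borel_measurable lebesgue"
    using A by measurable
  moreover have "\<psi> t * indicator S t * indicator A t = \<psi> t * indicator A t" for t
    using A(2) by (auto simp: indicator_def)
  ultimately show ?thesis by simp
qed

lemma ring_modulus_le_psi_integral: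
  fixes \<mu> :: "'a::metric_space measure" and \<mu>' :: "'b::metric_space measure"
    and \<psi> :: "real \<Rightarrow> ennreal"
  assumes ring: "ring_Q_mapping \<mu> \<alpha> \<mu>' \<alpha>' D x0 Q f" and \<alpha>: "0 < \<alpha>"
    and \<psi>: "\<psi> \<in> borel_measurable (restrict_space lebesgue {0<..<\<epsilon>0})"
    and r: "0 < r1" "r1 < r2" "r2 \<le> \<epsilon>0"
    and i: "(\<integral>\<^sup>+ t \<in> {r1<..<r2}. \<psi> t \<partial>lebesgue) = ennreal i" "0 < i"
  shows "modulus \<mu>' \<alpha>' {0..1} ((\<lambda>\<gamma>. f \<circ> \<gamma>) ` annulus_curves D x0 r1 r2)
           \<le> (\<integral>\<^sup>+ x \<in> annulus x0 r1 \<epsilon>0 \<inter> D. Q x * epowr (\<psi> (dist x x0)) \<alpha> \<partial>\<mu>) *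
              ennreal ((1 / i) powr \<alpha>)"
proof -
  define \<eta> where "\<eta> t = \<psi> t * indicator {r1<..<r2} t * ennreal (1 / i)" for t
  have \<psi>_r: "(\<lambda>t. \<psi> t * indicator {r1<..<r2} t) \<in> borel_measurable lebesgue"
    using r by (intro borel_measurable_mult_indicator_restrict[OF \<psi>]) auto
  then have \<eta>_meas: "\<eta> \<in> borel_measurable lebesgue" unfolding \<eta>_def by measurable
  have "(\<integral>\<^sup>+ t \<in> {r1<..<r2}. \<eta> t \<partial>lebesgue) = (\<integral>\<^sup>+ t. \<psi> t * indicator {r1<..<r2} t * ennreal (1 / i) \<partial>lebesgue)"
    unfolding \<eta>_def by (intro nn_integral_cong) (auto simp: indicator_def)
  also have "\<dots> = ennreal i * ennreal (1 / i)"
    using i by (simp add: nn_integral_multc[OF \<psi>_r])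
  also have "\<dots> = 1" using i by (simp flip: ennreal_mult)
  finally have \<eta>_normalised: "(\<integral>\<^sup>+ t \<in> {r1<..<r2}. \<eta> t \<partial>lebesgue) = 1" .
  have "modulus \<mu>' \<alpha>' {0..1} ((\<lambda>\<gamma>. f \<circ> \<gamma>) ` annulus_curves D x0 r1 r2)
        \<le> (\<integral>\<^sup>+ x \<in> annulus x0 r1 r2 \<inter> (D - {x0}). Q x * epowr (\<eta> (dist x x0)) \<alpha> \<partial>\<mu>)"
    using ring r \<eta>_meas \<eta>_normalised unfolding ring_Q_mapping_def annulus_curves_def by simp
  also have "\<dots> \<le> (\<integral>\<^sup>+ x. Q x * epowr (\<psi> (dist x x0)) \<alpha> * indicator (annulus x0 r1 \<epsilon>0 \<inter> D) x *
                        ennreal ((1 / i) powr \<alpha>) \<partial>\<mu>)"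
  proof (rule nn_integral_mono)
    fix x
    show "Q x * epowr (\<eta> (dist x x0)) \<alpha> * indicator (annulus x0 r1 r2 \<inter> (D - {x0})) x
          \<le> Q x * epowr (\<psi> (dist x x0)) \<alpha> * indicator (annulus x0 r1 \<epsilon>0 \<inter> D) x * ennreal ((1 / i) powr \<alpha>)"
    proof (cases "x \<in> annulus x0 r1 r2 \<inter> (D - {x0})")
      case True
      then have "x \<in> annulus x0 r1 \<epsilon>0 \<inter> D" "\<eta> (dist x x0) = \<psi> (dist x x0) * ennreal (1 / i)"
        using r by (auto simp: annulus_def \<eta>_def)
      then show ?thesis using True i \<alpha> by (simp add: epowr_mult_ennreal mult.assoc)
    qed simp
  qed
  also have "\<dots> \<le> (\<integral>\<^sup>+ x \<in> annulus x0 r1 \<epsilon>0 \<inter> D. Q x * epowr (\<psi> (dist x x0)) \<alpha> \<partial>\<mu>) *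
                   ennreal ((1 / i) powr \<alpha>)"
    using i by (intro nn_integral_mult_const_le) simp
  finally show ?thesis .
qed

lemma psi_integral_ratio_bounded:
  fixes \<psi> :: "real \<Rightarrow> ennreal"
  assumes \<psi>: "\<psi> \<in> borel_measurable (restrict_space lebesgue {0<..<\<epsilon>0})" and \<epsilon>0: "0 < \<epsilon>0"
    and I_pos: "\<forall>\<epsilon>2\<in>{0<..\<epsilon>0}. \<exists>\<epsilon>1\<in>{0<..\<epsilon>2}. \<forall>\<epsilon>\<in>{0<..<\<epsilon>1}.
                  0 < (\<integral>\<^sup>+ t \<in> {\<epsilon><..<\<epsilon>2}. \<psi> t \<partial>lebesgue) \<and>
                  (\<integral>\<^sup>+ t \<in> {\<epsilon><..<\<epsilon>2}. \<psi> t \<partial>lebesgue) < \<infinity>"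
    and r2: "0 < r2" "r2 \<le> \<epsilon>0"
  shows "\<exists>C>0. \<exists>\<delta>>0. \<delta> \<le> r2 \<and> (\<forall>r1\<in>{0<..<\<delta>}. \<exists>i>0.
           (\<integral>\<^sup>+ t \<in> {r1<..<r2}. \<psi> t \<partial>lebesgue) = ennreal i \<and>
           (\<integral>\<^sup>+ t \<in> {r1<..<\<epsilon>0}. \<psi> t \<partial>lebesgue) \<le> ennreal (C * i))"
proof -
  define I where "I a b = (\<integral>\<^sup>+ t \<in> {a<..<b}. \<psi> t \<partial>lebesgue)" for a b
  have I_mono: "I a b \<le> I a' b'" if "a' \<le> a" "b \<le> b'" for a b a' b'
    unfolding I_def by (intro nn_integral_mono mult_left_mono) (use that in \<open>auto simp: indicator_def\<close>)
  have I_pos_real: "\<exists>v. I a b = ennreal v \<and> 0 < v" if "0 < I a b" "I a b < \<infinity>" for a b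
    using that by (cases "I a b" rule: ennreal_cases) auto
  obtain \<epsilon>1 where \<epsilon>1: "0 < \<epsilon>1" "\<forall>\<epsilon>\<in>{0<..<\<epsilon>1}. 0 < I \<epsilon> \<epsilon>0 \<and> I \<epsilon> \<epsilon>0 < \<infinity>"
    using I_pos \<epsilon>0 unfolding I_def by fastforce
  obtain \<epsilon>1' where \<epsilon>1': "0 < \<epsilon>1'" "\<epsilon>1' \<le> r2" "\<forall>\<epsilon>\<in>{0<..<\<epsilon>1'}. 0 < I \<epsilon> r2 \<and> I \<epsilon> r2 < \<infinity>"
    using I_pos r2 unfolding I_def by fastforce
  text \<open>For \<open>r\<^sub>1 < \<delta>\<close>: \<open>I(r\<^sub>1, r\<^sub>2) \<ge> I(\<delta>, r\<^sub>2) = \<kappa>\<close> and \<open>I(r\<^sub>1, \<epsilon>\<^sub>0) \<le> I(r\<^sub>1, r\<^sub>2) + I(u, \<epsilon>\<^sub>0)\<close>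
    with \<open>I(u, \<epsilon>\<^sub>0) = j\<close> finite, so \<open>C = 1 + j / \<kappa>\<close> works.\<close>
  define \<delta> where "\<delta> = \<epsilon>1' / 2"
  define u where "u = min \<epsilon>1 r2 / 2"
  have \<delta>: "0 < \<delta>" "\<delta> \<le> r2" and u: "0 < u" "u < r2" "u < \<epsilon>1"
    using \<epsilon>1 \<epsilon>1' r2 by (auto simp: \<delta>_def u_def)
  obtain \<kappa> where \<kappa>: "I \<delta> r2 = ennreal \<kappa>" "0 < \<kappa>"
    using \<epsilon>1' I_pos_real[of \<delta> r2] by (auto simp: \<delta>_def)
  obtain j where j: "I u \<epsilon>0 = ennreal j" "0 \<le> j"
    using \<epsilon>1(2)[rule_format, of u] u by (cases "I u \<epsilon>0" rule: ennreal_cases) auto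
  have "0 < 1 + j / \<kappa>" using j \<kappa> by (simp add: add_pos_nonneg)
  moreover have "\<exists>i>0. I r1 r2 = ennreal i \<and> I r1 \<epsilon>0 \<le> ennreal ((1 + j / \<kappa>) * i)"
    if r1: "r1 \<in> {0<..<\<delta>}" for r1
  proof -
    obtain i where i: "I r1 r2 = ennreal i" "0 < i"
      using \<epsilon>1' I_pos_real[of r1 r2] r1 by (auto simp: \<delta>_def)
    have "\<kappa> \<le> i" using I_mono[of r1 \<delta> r2 r2] r1 \<kappa> i by simp
    have "I r1 \<epsilon>0 \<le> (\<integral>\<^sup>+ t. \<psi> t * indicator {r1<..<r2} t + \<psi> t * indicator {u<..<\<epsilon>0} t \<partial>lebesgue)"
      unfolding I_def using u by (intro nn_integral_mono) (auto simp: indicator_def)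
    also have "\<dots> = I r1 r2 + I u \<epsilon>0"
      unfolding I_def using r1 \<delta> u r2
      by (intro nn_integral_add borel_measurable_mult_indicator_restrict[OF \<psi>]) auto
    also have "\<dots> = ennreal (i + j)" using i j by (simp add: ennreal_plus)
    also have "\<dots> \<le> ennreal ((1 + j / \<kappa>) * i)"
    proof (rule ennreal_leI)
      have "j \<le> j / \<kappa> * i" using j \<kappa> \<open>\<kappa> \<le> i\<close> by (simp add: field_simps mult_right_mono)
      then show "i + j \<le> (1 + j / \<kappa>) * i" by (simp add: algebra_simps)
    qed
    finally show ?thesis using i by blast
  qed
  ultimately show ?thesis using \<delta> unfolding I_def by blast
qed

lemma ring_modulus_small:
  fixes \<mu> :: "'a::metric_space measure" and \<mu>' :: "'b::metric_space measure"
    and \<psi> :: "real \<Rightarrow> ennreal"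
  assumes ring: "ring_Q_mapping \<mu> \<alpha> \<mu>' \<alpha>' D x0 Q f" and \<alpha>: "0 < \<alpha>" and \<epsilon>0: "0 < \<epsilon>0"
    and \<psi>: "\<psi> \<in> borel_measurable (restrict_space lebesgue {0<..<\<epsilon>0})"
    and I_pos: "\<forall>\<epsilon>2\<in>{0<..\<epsilon>0}. \<exists>\<epsilon>1\<in>{0<..\<epsilon>2}. \<forall>\<epsilon>\<in>{0<..<\<epsilon>1}.
                  0 < (\<integral>\<^sup>+ t \<in> {\<epsilon><..<\<epsilon>2}. \<psi> t \<partial>lebesgue) \<and>
                  (\<integral>\<^sup>+ t \<in> {\<epsilon><..<\<epsilon>2}. \<psi> t \<partial>lebesgue) < \<infinity>"
    and little_o: "\<forall>c>0. eventually (\<lambda>\<epsilon>.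
                  (\<integral>\<^sup>+ x \<in> annulus x0 \<epsilon> \<epsilon>0 \<inter> D. Q x * epowr (\<psi> (dist x x0)) \<alpha> \<partial>\<mu>)
                  \<le> ennreal c * epowr (\<integral>\<^sup>+ t \<in> {\<epsilon><..<\<epsilon>0}. \<psi> t \<partial>lebesgue) \<alpha>) (at_right 0)"
    and r2: "0 < r2" "r2 \<le> \<epsilon>0" and e: "0 < e"
  shows "\<exists>r1. 0 < r1 \<and> r1 < r2 \<and>
           modulus \<mu>' \<alpha>' {0..1} ((\<lambda>\<gamma>. f \<circ> \<gamma>) ` annulus_curves D x0 r1 r2) \<le> ennreal e"
proof -
  obtain C \<delta> where C: "0 < C" and \<delta>: "0 < \<delta>" "\<delta> \<le> r2" and ratio: "\<forall>r1\<in>{0<..<\<delta>}. \<exists>i>0.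
      (\<integral>\<^sup>+ t \<in> {r1<..<r2}. \<psi> t \<partial>lebesgue) = ennreal i \<and>
      (\<integral>\<^sup>+ t \<in> {r1<..<\<epsilon>0}. \<psi> t \<partial>lebesgue) \<le> ennreal (C * i)"
    using psi_integral_ratio_bounded[OF \<psi> \<epsilon>0 I_pos r2] by blast
  define K where "K = C powr \<alpha>"
  have K: "0 < K" using C by (simp add: K_def)
  obtain b where b: "0 < b" "\<forall>\<epsilon>>0. \<epsilon> < b \<longrightarrow>
      (\<integral>\<^sup>+ x \<in> annulus x0 \<epsilon> \<epsilon>0 \<inter> D. Q x * epowr (\<psi> (dist x x0)) \<alpha> \<partial>\<mu>)
        \<le> ennreal (e / K) * epowr (\<integral>\<^sup>+ t \<in> {\<epsilon><..<\<epsilon>0}. \<psi> t \<partial>lebesgue) \<alpha>"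
    using little_o[rule_format, of "e / K"] e K unfolding eventually_at_right_field by auto
  define r1 where "r1 = min b \<delta> / 2"
  have r1: "0 < r1" "r1 < b" "r1 < \<delta>" using b \<delta> by (auto simp: r1_def)
  then obtain i where i: "0 < i" "(\<integral>\<^sup>+ t \<in> {r1<..<r2}. \<psi> t \<partial>lebesgue) = ennreal i"
    and i_ratio: "(\<integral>\<^sup>+ t \<in> {r1<..<\<epsilon>0}. \<psi> t \<partial>lebesgue) \<le> ennreal (C * i)"
    using ratio[rule_format, of r1] by auto
  have "modulus \<mu>' \<alpha>' {0..1} ((\<lambda>\<gamma>. f \<circ> \<gamma>) ` annulus_curves D x0 r1 r2)
        \<le> (\<integral>\<^sup>+ x \<in> annulus x0 r1 \<epsilon>0 \<inter> D. Q x * epowr (\<psi> (dist x x0)) \<alpha> \<partial>\<mu>) * ennreal ((1 / i) powr \<alpha>)"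
    using i r1 \<delta> r2 by (intro ring_modulus_le_psi_integral[OF ring \<alpha> \<psi>]) auto
  also have "\<dots> \<le> ennreal (e / K) * epowr (ennreal (C * i)) \<alpha> * ennreal ((1 / i) powr \<alpha>)"
  proof (rule mult_right_mono)
    have "(\<integral>\<^sup>+ x \<in> annulus x0 r1 \<epsilon>0 \<inter> D. Q x * epowr (\<psi> (dist x x0)) \<alpha> \<partial>\<mu>)
          \<le> ennreal (e / K) * epowr (\<integral>\<^sup>+ t \<in> {r1<..<\<epsilon>0}. \<psi> t \<partial>lebesgue) \<alpha>"
      using b r1 by auto
    also have "\<dots> \<le> ennreal (e / K) * epowr (ennreal (C * i)) \<alpha>"
      by (intro mult_left_mono epowr_mono[OF \<alpha> i_ratio]) simp
    finally show "(\<integral>\<^sup>+ x \<in> annulus x0 r1 \<epsilon>0 \<inter> D. Q x * epowr (\<psi> (dist x x0)) \<alpha> \<partial>\<mu>)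
          \<le> ennreal (e / K) * epowr (ennreal (C * i)) \<alpha>" .
  qed simp
  also have "\<dots> = ennreal (e / K * ((C * i) powr \<alpha> * (1 / i) powr \<alpha>))"
    using C i e K by (simp add: epowr_ennreal mult.assoc flip: ennreal_mult)
  also have "\<dots> = ennreal e"
  proof -
    have "(C * i) powr \<alpha> * (1 / i) powr \<alpha> = (C * i * (1 / i)) powr \<alpha>"
      using C i by (simp only: powr_mult[symmetric] mult_nonneg_nonneg less_imp_le divide_nonneg_nonneg zero_le_one)
    also have "\<dots> = K" using i by (simp add: K_def)
    finally show ?thesis using K by simp
  qed
  finally show ?thesis using r1 \<delta> by auto
qed

lemma curves_accumulating_at_subset_escaping:
  "curves_accumulating_at D x0 \<subseteq>
     (\<Union>m. {\<gamma> \<in> curves_accumulating_at D x0. \<exists>s\<in>{0<..<1}. r / real (Suc m) < dist (\<gamma> s) x0})"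
proof
  fix \<gamma> assume \<gamma>: "\<gamma> \<in> curves_accumulating_at D x0"
  then have "\<gamma> ` {0<..<1} \<subseteq> D - {x0}" by (simp add: curves_accumulating_at_def)
  then have "\<gamma> (1/2) \<noteq> x0" by force
  then have d: "0 < dist (\<gamma> (1/2)) x0" by simp
  obtain m :: nat where "r / dist (\<gamma> (1/2)) x0 < real m"
    using reals_Archimedean2 by blast
  then have "r / dist (\<gamma> (1/2)) x0 < real (Suc m)" by simp
  then have "r / real (Suc m) < dist (\<gamma> (1/2)) x0"
    using d by (simp add: divide_less_eq mult.commute)
  with \<gamma> show "\<gamma> \<in> (\<Union>m. {\<gamma> \<in> curves_accumulating_at D x0. \<exists>s\<in>{0<..<1}. r / real (Suc m) < dist (\<gamma> s) x0})"
    by force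
qed

theorem lemma5:
  fixes \<mu> :: "'a::metric_space measure" and \<mu>' :: "'b::metric_space measure"
    and D :: "'a set" and x0 :: 'a and \<alpha> \<alpha>' :: real
    and Q :: "'a \<Rightarrow> ennreal" and f :: "'a \<Rightarrow> 'b"
    and \<psi> :: "real \<Rightarrow> ennreal" and \<epsilon>0 :: real
  assumes mu: "loc_finite_borel \<mu>"
    and dimX: "hausdorff_dimension (UNIV :: 'a set) = ereal \<alpha>" and alpha: "\<alpha> \<ge> 2"
    and D: "open D" "connected D" "x0 \<in> D"
    and mu': "loc_finite_borel \<mu>'"
    and ahlfors: "ahlfors_regular \<mu>' \<alpha>'" and alpha': "\<alpha>' \<ge> 2"
    and poincare: "poincare_1p \<mu>' \<alpha>'"
    and Q: "Q \<in> borel_measurable (restrict_space \<mu> D)"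
    and ring: "ring_Q_mapping \<mu> \<alpha> \<mu>' \<alpha>' D x0 Q f"
    and eps0: "\<epsilon>0 > 0"
    and psi: "\<psi> \<in> borel_measurable (restrict_space lebesgue {0<..<\<epsilon>0})"
    and I_pos: "\<forall>\<epsilon>2\<in>{0<..\<epsilon>0}. \<exists>\<epsilon>1\<in>{0<..\<epsilon>2}. \<forall>\<epsilon>\<in>{0<..<\<epsilon>1}.
                  0 < (\<integral>\<^sup>+ t \<in> {\<epsilon><..<\<epsilon>2}. \<psi> t \<partial>lebesgue) \<and>
                  (\<integral>\<^sup>+ t \<in> {\<epsilon><..<\<epsilon>2}. \<psi> t \<partial>lebesgue) < \<infinity>"
    and little_o: "\<forall>c>0. eventually (\<lambda>\<epsilon>.
                  (\<integral>\<^sup>+ x \<in> annulus x0 \<epsilon> \<epsilon>0 \<inter> D. Q x * epowr (\<psi> (dist x x0)) \<alpha> \<partial>\<mu>)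
                  \<le> ennreal c * epowr (\<integral>\<^sup>+ t \<in> {\<epsilon><..<\<epsilon>0}. \<psi> t \<partial>lebesgue) \<alpha>) (at_right 0)"
  shows "modulus \<mu>' \<alpha>' {0<..<1}
           ((\<lambda>\<gamma>. f \<circ> \<gamma>) ` {\<gamma> :: real \<Rightarrow> 'a. continuous_on {0<..<1} \<gamma> \<and>
               \<gamma> ` {0<..<1} \<subseteq> D - {x0} \<and>
               (\<exists>t :: nat \<Rightarrow> real. (\<forall>k. t k \<in> {0<..<1}) \<and> t \<longlonglongrightarrow> 0 \<and>
                   (\<lambda>k. \<gamma> (t k)) \<longlonglongrightarrow> x0)}) = 0"
proof -
  have \<alpha>_pos: "0 < \<alpha>" using alpha by simp
  define G where "G m = (\<lambda>\<gamma>. f \<circ> \<gamma>) `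
    {\<gamma> \<in> curves_accumulating_at D x0. \<exists>s\<in>{0<..<1}. \<epsilon>0 / real (Suc m) < dist (\<gamma> s) x0}" for m
  have G_null: "modulus \<mu>' \<alpha>' {0<..<1} (G m) = 0" for m
  proof -
    have r2: "0 < \<epsilon>0 / real (Suc m)" "\<epsilon>0 / real (Suc m) \<le> \<epsilon>0"
      using eps0 by (auto simp: divide_le_eq)
    have "modulus \<mu>' \<alpha>' {0<..<1} (G m) \<le> 0 + ennreal e" if e: "0 < e" for e
    proof -
      obtain r1 where r1: "0 < r1" "r1 < \<epsilon>0 / real (Suc m)" and small:
        "modulus \<mu>' \<alpha>' {0..1} ((\<lambda>\<gamma>. f \<circ> \<gamma>) ` annulus_curves D x0 r1 (\<epsilon>0 / real (Suc m))) \<le> ennreal e"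
        using ring_modulus_small[OF ring \<alpha>_pos eps0 psi I_pos little_o r2 e] by auto
      have "modulus \<mu>' \<alpha>' {0<..<1} (G m)
            \<le> modulus \<mu>' \<alpha>' {0..1} ((\<lambda>\<gamma>. f \<circ> \<gamma>) ` annulus_curves D x0 r1 (\<epsilon>0 / real (Suc m)))"
        unfolding G_def using r1 by (rule modulus_escaping_curves_le)
      then show ?thesis using small by (simp add: order_trans)
    qed
    then have "modulus \<mu>' \<alpha>' {0<..<1} (G m) \<le> 0" by (rule ennreal_le_epsilon)
    then show ?thesis by simp
  qed
  have "modulus \<mu>' \<alpha>' {0<..<1} ((\<lambda>\<gamma>. f \<circ> \<gamma>) ` curves_accumulating_at D x0)
        \<le> modulus \<mu>' \<alpha>' {0<..<1} (\<Union>m. G m)"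
    unfolding G_def image_UN[symmetric]
    by (intro modulus_mono image_mono curves_accumulating_at_subset_escaping)
  also have "\<dots> \<le> (\<Sum>m. modulus \<mu>' \<alpha>' {0<..<1} (G m))"
    using alpha' mu' by (intro modulus_Union_le) (simp_all add: loc_finite_borel_def)
  also have "\<dots> = 0" by (simp add: G_null)
  finally show ?thesis unfolding curves_accumulating_at_def by simp
qed

end
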